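(* For an integer $n\ge 4$, let $f(n)$ be the minimum number of edges of a finite simple edge-pancyclic graph of order $n$ having at least one edge. Then $$\frac{3n}{2}\le f(n)\le 2n-2 .$$
   Context: A $k$-cycle is a cycle of length $k$. A graph $G$ of order $n$ is edge-pancyclic if for every integer $k$ with $3\le k\le n$, every edge of $G$ lies in a $k$-cycle. Edgeless graphs, which are vacuously edge-pancyclic, are excluded. *)

theory Defs
  imports Complex_Main
begin

definition simple_graph :: "nat \<Rightarrow> nat set set \<Rightarrow> bool" where
  "simple_graph n E \<longleftrightarrow> (\<forall>e\<in>E. e \<subseteq> {..<n} \<and> card e = 2)"

definition is_cycle :: "nat set set \<Rightarrow> nat list \<Rightarrow> bool" where
  "is_cycle E c \<longleftrightarrow> length c \<ge> 3 \<and> distinct c \<and>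
     (\<forall>i<length c. {c ! i, c ! ((i + 1) mod length c)} \<in> E)"

definition cycle_edges :: "nat list \<Rightarrow> nat set set" where
  "cycle_edges c = {{c ! i, c ! ((i + 1) mod length c)} | i. i < length c}"

definition edge_pancyclic :: "nat \<Rightarrow> nat set set \<Rightarrow> bool" where
  "edge_pancyclic n E \<longleftrightarrow>
     (\<forall>k. 3 \<le> k \<and> k \<le> n \<longrightarrow>
        (\<forall>e\<in>E. \<exists>c. is_cycle E c \<and> length c = k \<and> e \<in> cycle_edges c))"

definition f :: "nat \<Rightarrow> nat" where
  "f n = Min {card E | E. simple_graph n E \<and> E \<noteq> {} \<and> edge_pancyclic n E}"

end

theory Submission
  imports Defs
begin

text \<open>Lower bound: every vertex v has degree at least 3. A Hamiltonian cycle gives v two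
  neighbours a and b; if these were all, the triangle through the edge va would have to be vab,
  so ab is an edge. But a Hamiltonian cycle through ab would visit v between a and b, closing a
  triangle inside a cycle of length n \<ge> 4. Double counting then gives 3n \<le> 2|E|.

  Upper bound: the wheel with n - 1 rim vertices has 2n - 2 edges, and for every k and every
  edge, the hub followed by k - 1 consecutive rim vertices is a k-cycle through that edge.\<close>

lemma cyclic_succ_pred:
  assumes "p < L" "3 \<le> L"
  shows "Suc p mod L \<noteq> p" "(p + L - 1) mod L \<noteq> p"
    "Suc p mod L \<noteq> (p + L - 1) mod L" "Suc ((p + L - 1) mod L) mod L = p"
  using assms by (auto simp: mod_if)

lemma cyclic_succ_succ_ne_pred:
  assumes "p < L" "4 \<le> L"
  shows "Suc (Suc p mod L) mod L \<noteq> (p + L - 1) mod L"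
  using assms by (auto simp: mod_if)

lemma cycle_edge:
  "is_cycle E c \<Longrightarrow> i < length c \<Longrightarrow> {c ! i, c ! (Suc i mod length c)} \<in> E"
  unfolding is_cycle_def by simp

lemma cycle_edges_subset: "e \<in> cycle_edges c \<Longrightarrow> e \<subseteq> set c"
  unfolding cycle_edges_def by (auto intro!: nth_mem mod_less_divisor)

lemma cycle_neighbours:
  assumes c: "is_cycle E c" and v: "v \<in> set c"
  obtains a b where "{v, a} \<in> E" "{v, b} \<in> E" "a \<noteq> b" "a \<noteq> v" "b \<noteq> v"
    "4 \<le> length c \<Longrightarrow> {a, b} \<notin> cycle_edges c"
proof -
  define L where "L = length c"
  have L3: "3 \<le> L" and dist: "distinct c" using c unfolding is_cycle_def L_def by auto
  obtain p where p: "p < L" "v = c ! p" using v unfolding L_def by (auto simp: in_set_conv_nth)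
  define s where "s = Suc p mod L"
  define q where "q = (p + L - 1) mod L"
  have sq: "s < L" "q < L" "s \<noteq> p" "q \<noteq> p" "s \<noteq> q" "Suc q mod L = p"
    using p(1) L3 cyclic_succ_pred[OF p(1) L3] unfolding s_def q_def by simp_all
  have "{v, c ! s} \<in> E" using cycle_edge[OF c, of p] p unfolding s_def L_def by simp
  moreover have "{v, c ! q} \<in> E"
    using cycle_edge[OF c, of q] sq p unfolding L_def by (simp add: insert_commute)
  moreover have "c ! s \<noteq> c ! q" "c ! s \<noteq> v" "c ! q \<noteq> v"
    using sq p dist unfolding L_def by (simp_all add: nth_eq_iff_index_eq)
  moreover have "{c ! s, c ! q} \<notin> cycle_edges c" if L4: "4 \<le> L"
  proof
    assume "{c ! s, c ! q} \<in> cycle_edges c"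
    then obtain t where t: "t < L" "{c ! s, c ! q} = {c ! t, c ! (Suc t mod L)}"
      unfolding cycle_edges_def L_def by auto
    have "Suc t mod L < L" using t(1) by simp
    then have "{s, q} = {t, Suc t mod L}"
      using t sq dist unfolding L_def doubleton_eq_iff by (simp add: nth_eq_iff_index_eq)
    moreover have "Suc s mod L \<noteq> q"
      using cyclic_succ_succ_ne_pred[OF p(1) L4] unfolding s_def q_def .
    ultimately show False
      using sq(3,6) unfolding doubleton_eq_iff by auto
  qed
  ultimately show thesis using that L_def by blast
qed

lemma triangle_adjacent:
  assumes c: "is_cycle E c" "length c = 3" and xy: "x \<in> set c" "y \<in> set c" "x \<noteq> y"
  shows "{x, y} \<in> E"
proof -
  obtain a b d where abd: "c = [a, b, d]"
    using c(2) by (metis length_0_conv length_Suc_conv numeral_3_eq_3)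
  have "{c ! i, c ! ((i + 1) mod 3)} \<in> E" if "i < 3" for i
    using c that unfolding is_cycle_def by simp
  from this[of 0] this[of 1] this[of 2] have "{a, b} \<in> E" "{b, d} \<in> E" "{d, a} \<in> E"
    by (simp_all add: abd)
  then show ?thesis using xy abd by (auto simp: insert_commute)
qed

lemma cycle_vertices_subset:
  assumes "simple_graph n E" "is_cycle E c"
  shows "set c \<subseteq> {..<n}"
proof
  fix x assume "x \<in> set c"
  then obtain i where "i < length c" "x = c ! i" by (auto simp: in_set_conv_nth)
  then show "x \<in> {..<n}"
    using cycle_edge[OF assms(2)] assms(1) unfolding simple_graph_def by blast
qed

lemma hamiltonian_cycle_vertices:
  assumes "simple_graph n E" "is_cycle E c" "length c = n"
  shows "set c = {..<n}"
  using assms cycle_vertices_subset[OF assms(1,2)] distinct_card[of c]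
  unfolding is_cycle_def by (simp add: card_subset_eq)

lemma simple_graph_finite: "simple_graph n E \<Longrightarrow> finite E"
  unfolding simple_graph_def by (meson PowI finite_Pow_iff finite_lessThan finite_subset subsetI)

lemma edge_pancyclic_third_neighbour:
  assumes sg: "simple_graph n E" and ne: "E \<noteq> {}" and ep: "edge_pancyclic n E"
    and n4: "4 \<le> n" and v: "v < n"
  obtains a b w where "{v, a} \<in> E" "{v, b} \<in> E" "{v, w} \<in> E" "a \<noteq> b" "w \<noteq> a" "w \<noteq> b"
proof -
  have cycle_through: "\<exists>c. is_cycle E c \<and> length c = k \<and> e \<in> cycle_edges c"
    if "3 \<le> k" "k \<le> n" "e \<in> E" for k e
    using ep that unfolding edge_pancyclic_def by blast
  have on_hamiltonian: "v \<in> set c" if "is_cycle E c" "length c = n" for c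
    using hamiltonian_cycle_vertices[OF sg that] v by simp
  obtain C1 where C1: "is_cycle E C1" "length C1 = n"
    using cycle_through[of n] n4 ne by fastforce
  obtain a b where ab: "{v, a} \<in> E" "{v, b} \<in> E" "a \<noteq> b" "a \<noteq> v" "b \<noteq> v"
    using cycle_neighbours[OF C1(1) on_hamiltonian[OF C1]] by metis
  have "\<exists>w. {v, w} \<in> E \<and> w \<noteq> a \<and> w \<noteq> b"
  proof (rule ccontr)
    assume "\<nexists>w. {v, w} \<in> E \<and> w \<noteq> a \<and> w \<noteq> b"
    then have only_ab: "w = a \<or> w = b" if "{v, w} \<in> E" for w
      using that by blast
    obtain d where d: "is_cycle E d" "length d = 3" "{v, a} \<in> cycle_edges d"
      using cycle_through[of 3 "{v, a}"] n4 ab(1) by auto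
    have "{v, a} \<subseteq> set d" using cycle_edges_subset[OF d(3)] .
    moreover have "card (set d) = 3" using d distinct_card unfolding is_cycle_def by metis
    ultimately have "card (set d - {v, a}) = 1"
      using ab(4) by (simp add: card_Diff_subset)
    then obtain w where w: "w \<in> set d" "w \<noteq> v" "w \<noteq> a"
      by (metis Diff_iff card_1_singletonE insertCI)
    have "w = b" using only_ab triangle_adjacent[OF d(1,2)] w \<open>{v, a} \<subseteq> set d\<close> by blast
    then have "{a, b} \<in> E"
      using triangle_adjacent[OF d(1,2)] w \<open>{v, a} \<subseteq> set d\<close> ab(3) by blast
    then obtain C where C: "is_cycle E C" "length C = n" "{a, b} \<in> cycle_edges C"
      using cycle_through[of n] n4 by fastforce
    obtain a' b' where "{v, a'} \<in> E" "{v, b'} \<in> E" "a' \<noteq> b'" "{a', b'} \<notin> cycle_edges C"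
      using cycle_neighbours[OF C(1) on_hamiltonian[OF C(1,2)]] C(2) n4 by metis
    then have "{a', b'} = {a, b}" using only_ab by auto
    then show False using C(3) \<open>{a', b'} \<notin> cycle_edges C\<close> by simp
  qed
  then show thesis using that ab by blast
qed

lemma sum_card_incident_edges:
  assumes "simple_graph n E"
  shows "(\<Sum>v<n. card {e\<in>E. v \<in> e}) = 2 * card E"
proof -
  have fin: "finite E" using simple_graph_finite[OF assms] .
  have "(\<Sum>v<n. card {e\<in>E. v \<in> e}) = (\<Sum>v<n. \<Sum>e\<in>E. if v \<in> e then 1 else 0)"
    using fin by (simp add: sum.If_cases Collect_conj_eq Int_commute)
  also have "\<dots> = (\<Sum>e\<in>E. \<Sum>v<n. if v \<in> e then 1 else 0)"
    by (rule sum.swap)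
  also have "\<dots> = (\<Sum>e\<in>E. card e)"
  proof (intro sum.cong refl)
    fix e assume "e \<in> E"
    then have "e \<subseteq> {..<n}" using assms unfolding simple_graph_def by blast
    then show "(\<Sum>v<n. if v \<in> e then 1 else 0) = card e"
      by (simp add: sum.If_cases Int_absorb1)
  qed
  also have "\<dots> = 2 * card E"
    using assms unfolding simple_graph_def by simp
  finally show ?thesis .
qed

lemma edge_pancyclic_card_lower:
  assumes sg: "simple_graph n E" and ne: "E \<noteq> {}" and ep: "edge_pancyclic n E"
    and n4: "4 \<le> n"
  shows "3 * n \<le> 2 * card E"
proof -
  have "3 \<le> card {e\<in>E. v \<in> e}" if v: "v < n" for v
  proof -
    obtain a b w where abw: "{v, a} \<in> E" "{v, b} \<in> E" "{v, w} \<in> E" "a \<noteq> b" "w \<noteq> a" "w \<noteq> b"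
      using edge_pancyclic_third_neighbour[OF sg ne ep n4 v] .
    have "card {{v, a}, {v, b}, {v, w}} = 3"
      using abw(4-6) by (simp add: doubleton_eq_iff)
    moreover have "{{v, a}, {v, b}, {v, w}} \<subseteq> {e\<in>E. v \<in> e}" using abw(1-3) by auto
    moreover have "finite {e\<in>E. v \<in> e}" using simple_graph_finite[OF sg] by simp
    ultimately show ?thesis using card_mono by metis
  qed
  then have "(\<Sum>v<n. 3) \<le> (\<Sum>v<n. card {e\<in>E. v \<in> e})" by (intro sum_mono) auto
  then show ?thesis using sum_card_incident_edges[OF sg] by simp
qed

definition wheel :: "nat \<Rightarrow> nat set set" where
  "wheel m = (\<lambda>i. {i, Suc i mod m}) ` {..<m} \<union> (\<lambda>i. {i, m}) ` {..<m}"

definition wheel_cycle :: "nat \<Rightarrow> nat \<Rightarrow> nat \<Rightarrow> nat list" where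
  "wheel_cycle m i k = m # take (k - 1) (rotate i [0..<m])"

lemma simple_graph_wheel:
  assumes "3 \<le> m"
  shows "simple_graph (Suc m) (wheel m)"
proof -
  have "{i, Suc i mod m} \<subseteq> {..<Suc m} \<and> card {i, Suc i mod m} = 2" if "i < m" for i
    using assms that by (auto simp: mod_if)
  then show ?thesis unfolding simple_graph_def wheel_def by auto
qed

lemma card_wheel_le: "card (wheel m) \<le> 2 * m"
proof -
  have "card (wheel m) \<le> card ((\<lambda>i. {i, Suc i mod m}) ` {..<m}) + card ((\<lambda>i. {i, m}) ` {..<m})"
    unfolding wheel_def by (rule card_Un_le)
  also have "\<dots> \<le> card {..<m} + card {..<m}"
    by (intro add_mono card_image_le) auto
  finally show ?thesis by simp
qed

lemma wheel_cycle_length: "1 \<le> k \<Longrightarrow> k \<le> Suc m \<Longrightarrow> length (wheel_cycle m i k) = k"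
  unfolding wheel_cycle_def by simp

lemma wheel_cycle_nth:
  "0 < t \<Longrightarrow> t < k \<Longrightarrow> k \<le> Suc m \<Longrightarrow> wheel_cycle m i k ! t = (i + (t - 1)) mod m"
  unfolding wheel_cycle_def by (cases t) (auto simp: nth_rotate)

lemma is_cycle_wheel_cycle:
  assumes m: "3 \<le> m" and i: "i < m" and k: "3 \<le> k" "k \<le> Suc m"
  shows "is_cycle (wheel m) (wheel_cycle m i k)"
  unfolding is_cycle_def
proof (intro conjI allI impI)
  let ?c = "wheel_cycle m i k"
  have len: "length ?c = k" using wheel_cycle_length k by simp
  then show "3 \<le> length ?c" using k by simp
  have "set (take (k - 1) (rotate i [0..<m])) \<subseteq> {..<m}"
    using set_take_subset by fastforce
  then show "distinct ?c" unfolding wheel_cycle_def by auto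
  fix t assume "t < length ?c"
  then have t: "t < k" using len by simp
  have rim: "{j mod m, Suc j mod m} \<in> wheel m" for j
    unfolding wheel_def using m by (auto simp: mod_Suc_eq)
  have spoke: "{j mod m, m} \<in> wheel m" for j
    unfolding wheel_def using m by auto
  consider "t = 0" | "0 < t" "Suc t = k" | "0 < t" "Suc t < k" using t by linarith
  then show "{?c ! t, ?c ! ((t + 1) mod length ?c)} \<in> wheel m"
  proof cases
    case 1
    then show ?thesis using spoke[of i] wheel_cycle_nth[of 1 k m i] i k len
      by (simp add: wheel_cycle_def insert_commute)
  next
    case 2
    then show ?thesis using spoke[of "i + (t - 1)"] wheel_cycle_nth[of t k m i] k len
      by (simp add: wheel_cycle_def)
  next
    case 3
    then show ?thesis
      using rim[of "i + (t - 1)"] wheel_cycle_nth[of t k m i] wheel_cycle_nth[of "Suc t" k m i] k len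
      by simp
  qed
qed

lemma edge_pancyclic_wheel:
  assumes m: "3 \<le> m"
  shows "edge_pancyclic (Suc m) (wheel m)"
  unfolding edge_pancyclic_def
proof (intro allI impI ballI)
  fix k e assume k: "3 \<le> k \<and> k \<le> Suc m" and e: "e \<in> wheel m"
  from e obtain i where i: "i < m" "e = {i, Suc i mod m} \<or> e = {i, m}"
    unfolding wheel_def by blast
  let ?c = "wheel_cycle m i k"
  have len: "length ?c = k" using wheel_cycle_length k by simp
  have "{?c ! t, ?c ! (Suc t mod k)} \<in> cycle_edges ?c" if "t < k" for t
    unfolding cycle_edges_def using len that by auto
  from this[of 0] this[of 1] have "{m, i} \<in> cycle_edges ?c" "{i, Suc i mod m} \<in> cycle_edges ?c"
    using wheel_cycle_nth[of 1 k m i] wheel_cycle_nth[of 2 k m i] k i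
    by (simp_all add: wheel_cycle_def numeral_2_eq_2)
  then show "\<exists>c. is_cycle (wheel m) c \<and> length c = k \<and> e \<in> cycle_edges c"
    using is_cycle_wheel_cycle[OF m i(1)] k len i(2) by (auto simp: insert_commute)
qed

theorem theorem4:
  fixes n :: nat
  assumes "n \<ge> 4"
  shows "3 * real n / 2 \<le> real (f n) \<and> f n \<le> 2 * n - 2"
proof -
  define S where "S = {card E | E. simple_graph n E \<and> E \<noteq> {} \<and> edge_pancyclic n E}"
  have f_eq_Min: "f n = Min S" unfolding f_def S_def ..
  have "S \<subseteq> card ` Pow (Pow {..<n})"
    unfolding S_def simple_graph_def by blast
  then have fin: "finite S" by (rule finite_subset) simp
  define m where "m = n - 1"
  have n: "n = Suc m" and m: "3 \<le> m" using assms unfolding m_def by auto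
  have "wheel m \<noteq> {}" using m unfolding wheel_def by (auto simp: lessThan_empty_iff)
  then have wheel_in: "card (wheel m) \<in> S"
    unfolding S_def n using simple_graph_wheel[OF m] edge_pancyclic_wheel[OF m] by blast
  have upper: "f n \<le> 2 * n - 2"
    using Min_le[OF fin wheel_in] card_wheel_le[of m] f_eq_Min n by simp
  obtain E where "simple_graph n E" "E \<noteq> {}" "edge_pancyclic n E" "f n = card E"
    using Min_in[OF fin] wheel_in unfolding f_eq_Min S_def by blast
  then have "3 * n \<le> 2 * f n" using edge_pancyclic_card_lower assms by simp
  then show ?thesis using upper by simp
qed

end
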